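(* Let $V$ be a finite-dimensional real vector space with a non-degenerate inner product of signature $(p,q)$, $p,q\ge 1$, $p+q\ge 3$; let $Q(v)=(v,v)$, $\mathcal{N}=\{v:Q(v)=0\}$, and $\mathcal{I}=Q\cdot\mathbb{R}[V,\mathbb{R}]$. Let $W$ be a finite-dimensional real vector space of dimension $w$ and let $x_1,\dots,x_r\in\mathbb{R}[V,W]$ with $r\le w$. The following are equivalent: \begin{enumerate} \item the vectors $x_1(v),\dots,x_r(v)$ are linearly dependent for all $v\in\mathcal{N}$; \item $I(x_1,\dots,x_r)\subset\mathcal{I}$; \item there exist $c_1,\dots,c_r\in\mathbb{R}[V,\mathbb{R}]$, with $c_i\notin\mathcal{I}$ for at least one $i$, such that $c_1x_1+\dots+c_rx_r\in\mathcal{I}\,\mathbb{R}[V,W]$, i.e. $c_1x_1+\dots+c_rx_r=Q\cdot y$ for some $y\in\mathbb{R}[V,W]$. \end{enumerate}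
   Context: $\mathbb{R}[V,\mathbb{R}]$ is the ring of real polynomial functions on $V$ and $\mathbb{R}[V,W]$ the $\mathbb{R}[V,\mathbb{R}]$-module of polynomial maps $V\to W$. For a basis of $W$, let $\mathbf{X}$ be the $w\times r$ matrix over $\mathbb{R}[V,\mathbb{R}]$ whose $i$-th column is the coordinate vector of $x_i$; $I(x_1,\dots,x_r)$ is the ideal generated by all $r\times r$ minors of $\mathbf{X}$ (independent of the basis). *)

theory Defs
  imports "HOL-Analysis.Analysis"
begin

inductive_set poly_fun :: "('v::real_vector \<Rightarrow> real) set" where
  const: "(\<lambda>v. c) \<in> poly_fun"
| lin: "linear f \<Longrightarrow> f \<in> poly_fun"
| add: "f \<in> poly_fun \<Longrightarrow> g \<in> poly_fun \<Longrightarrow> (\<lambda>v. f v + g v) \<in> poly_fun"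
| mult: "f \<in> poly_fun \<Longrightarrow> g \<in> poly_fun \<Longrightarrow> (\<lambda>v. f v * g v) \<in> poly_fun"

definition poly_map :: "('v::real_vector \<Rightarrow> 'w::euclidean_space) \<Rightarrow> bool" where
  "poly_map f \<longleftrightarrow> (\<forall>b\<in>Basis. (\<lambda>v. f v \<bullet> b) \<in> poly_fun)"

definition has_signature :: "('v::euclidean_space \<Rightarrow> 'v \<Rightarrow> real) \<Rightarrow> nat \<Rightarrow> nat \<Rightarrow> bool" where
  "has_signature B p q \<longleftrightarrow> bilinear B \<and> (\<forall>u v. B u v = B v u) \<and> p + q = DIM('v) \<and>
     (\<exists>e::nat \<Rightarrow> 'v. independent (e ` {..<p+q}) \<and> inj_on e {..<p+q} \<and>
        (\<forall>i<p+q. \<forall>j<p+q. i \<noteq> j \<longrightarrow> B (e i) (e j) = 0) \<and>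
        (\<forall>i<p. B (e i) (e i) = 1) \<and> (\<forall>i. p \<le> i \<and> i < p+q \<longrightarrow> B (e i) (e i) = -1))"

definition Q_ideal :: "('v::real_vector \<Rightarrow> real) \<Rightarrow> ('v \<Rightarrow> real) set" where
  "Q_ideal Q = {(\<lambda>v. Q v * g v) | g. g \<in> poly_fun}"

definition row_sels :: "nat \<Rightarrow> 'w::euclidean_space list set" where
  "row_sels r = {bs. length bs = r \<and> distinct bs \<and> set bs \<subseteq> Basis}"

text \<open>The r \<times> r minor of the matrix X (columns = coordinate vectors of x_0..x_{r-1})
  obtained from the rows bs (Leibniz formula).\<close>
definition minor :: "nat \<Rightarrow> (nat \<Rightarrow> 'v \<Rightarrow> 'w::euclidean_space) \<Rightarrow> 'w list \<Rightarrow> 'v \<Rightarrow> real" where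
  "minor r x bs v = (\<Sum>p | p permutes {..<r}. of_int (sign p) * (\<Prod>i<r. x (p i) v \<bullet> bs ! i))"

definition minors_ideal :: "nat \<Rightarrow> (nat \<Rightarrow> 'v::real_vector \<Rightarrow> 'w::euclidean_space) \<Rightarrow> ('v \<Rightarrow> real) set" where
  "minors_ideal r x = {(\<lambda>v. \<Sum>bs\<in>row_sels r. c bs v * minor r x bs v) | c.
        \<forall>bs\<in>row_sels r. c bs \<in> poly_fun}"

end

(*
  For a form of signature (p, q) with p, q >= 1 there is a null vector u; with b v = 2 B(v, u)
  one has Q (v + t u) = Q v + t b v, so every v with b v <> 0 is moved onto the cone N along u.
  Dividing a power of b times f by Q, with a remainder that is constant along u, therefore shows
  that a polynomial vanishing on N is a multiple of Q and that Q generates a prime ideal; here b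
  is coprime to Q because Q does not vanish on the kernel of b, which is where p + q >= 3 enters.

  The equivalences then come from linear algebra over a commutative ring: if all maximal minors
  of the coordinate matrix X lie in an ideal P not containing 1, bordering a largest square
  submatrix whose minor is not in P and expanding along the new row gives a relation among the
  columns of X modulo P with a coefficient outside P.  With P the functions vanishing at a point
  of N, respectively on all of N, this gives (2) => (1) and (2) => (3).  Conversely the minors vanish
  wherever the columns are dependent, so (1) => (2) by the Nullstellensatz and (3) => (2) by
  primality.
*)
theory Submission
  imports Defs "Jordan_Normal_Form.Determinant" "HOL-Library.Function_Algebras"
begin

no_notation scalar_prod (infix \<open>\<bullet>\<close> 70) and vec_nth (infixl \<open>$\<close> 90)

section \<open>Polynomial functions\<close>

declare poly_fun.const [intro] poly_fun.add [intro] poly_fun.mult [intro]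

lemma poly_fun_diff [intro]: "f \<in> poly_fun \<Longrightarrow> g \<in> poly_fun \<Longrightarrow> (\<lambda>v. f v - g v) \<in> poly_fun"
  using poly_fun.add[OF _ poly_fun.mult[OF poly_fun.const[of "-1"]], of f g] by simp

lemma poly_fun_sum [intro]:
  "finite S \<Longrightarrow> (\<And>i. i \<in> S \<Longrightarrow> f i \<in> poly_fun) \<Longrightarrow> (\<lambda>v. \<Sum>i\<in>S. f i v) \<in> poly_fun"
  by (induction S rule: finite_induct) auto

lemma poly_fun_prod [intro]:
  "finite S \<Longrightarrow> (\<And>i. i \<in> S \<Longrightarrow> f i \<in> poly_fun) \<Longrightarrow> (\<lambda>v. \<Prod>i\<in>S. f i v) \<in> poly_fun"
  by (induction S rule: finite_induct) auto

lemma poly_fun_power [intro]: "f \<in> poly_fun \<Longrightarrow> (\<lambda>v. f v ^ n) \<in> poly_fun"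
  by (induction n) auto

lemma poly_fun_compose_linear:
  assumes "f \<in> poly_fun" and "linear L"
  shows "(\<lambda>v. f (L v)) \<in> poly_fun"
  using assms(1)
proof (induction rule: poly_fun.induct)
  case (lin f)
  then show ?case using poly_fun.lin[OF linear_compose[OF assms(2) lin]] by (simp add: o_def)
qed auto

lemma poly_fun_on_line:
  assumes "f \<in> poly_fun"
  obtains P where "\<And>t. f (v + t *\<^sub>R d) = poly P t"
proof -
  from assms have "\<exists>P. \<forall>t. f (v + t *\<^sub>R d) = poly P t"
  proof (induction rule: poly_fun.induct)
    case (const c)
    show ?case by (rule exI[of _ "[:c:]"]) simp
  next
    case (lin f)
    show ?case
      by (rule exI[of _ "[:f v, f d:]"]) (simp add: linear_add[OF lin] linear_scale[OF lin])
  next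
    case (add f g)
    then obtain P1 P2 where "\<forall>t. f (v + t *\<^sub>R d) = poly P1 t" "\<forall>t. g (v + t *\<^sub>R d) = poly P2 t"
      by blast
    then show ?case by (intro exI[of _ "P1 + P2"]) simp
  next
    case (mult f g)
    then obtain P1 P2 where "\<forall>t. f (v + t *\<^sub>R d) = poly P1 t" "\<forall>t. g (v + t *\<^sub>R d) = poly P2 t"
      by blast
    then show ?case by (intro exI[of _ "P1 * P2"]) simp
  qed
  then show ?thesis using that by blast
qed

text \<open>On the line through two points of \<open>S\<close> both factors become univariate polynomials.\<close>
lemma poly_fun_no_zero_divisors_on_affine:
  assumes "affine S" and "f \<in> poly_fun" "g \<in> poly_fun" and fg: "\<And>v. v \<in> S \<Longrightarrow> f v * g v = 0"
  shows "(\<forall>v\<in>S. f v = 0) \<or> (\<forall>v\<in>S. g v = 0)"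
proof (rule ccontr)
  assume "\<not> ?thesis"
  then obtain v1 v2 where v1: "v1 \<in> S" "f v1 \<noteq> 0" and v2: "v2 \<in> S" "g v2 \<noteq> 0"
    by blast
  obtain P1 where P1: "\<And>t. f (v1 + t *\<^sub>R (v2 - v1)) = poly P1 t"
    using poly_fun_on_line[OF assms(2)] by blast
  obtain P2 where P2: "\<And>t. g (v1 + t *\<^sub>R (v2 - v1)) = poly P2 t"
    using poly_fun_on_line[OF assms(3)] by blast
  have on_line: "v1 + t *\<^sub>R (v2 - v1) \<in> S" for t
  proof -
    have "(1 - t) *\<^sub>R v1 + t *\<^sub>R v2 \<in> S"
      using \<open>affine S\<close> v1(1) v2(1) unfolding affine_def by simp
    then show ?thesis by (simp add: algebra_simps)
  qed
  have "poly (P1 * P2) t = 0" for t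
    using fg[OF on_line[of t]] P1[of t] P2[of t] by simp
  then have "P1 * P2 = 0"
    using poly_all_0_iff_0 by blast
  then have "P1 = 0 \<or> P2 = 0"
    by simp
  moreover have "poly P1 0 \<noteq> 0" "poly P2 1 \<noteq> 0"
    using P1[of 0] P2[of 1] v1 v2 by simp_all
  ultimately show False
    by auto
qed

corollary poly_fun_no_zero_divisors:
  assumes "f \<in> poly_fun" "g \<in> poly_fun" and "\<And>v. f v * g v = 0"
  shows "(\<forall>v. f v = 0) \<or> (\<forall>v. g v = 0)"
  using poly_fun_no_zero_divisors_on_affine[OF affine_UNIV assms] by simp

lemma poly_fun_decompose_linear:
  assumes "f \<in> poly_fun" and "linear l" "l w = 1"
  obtains f' where "f' \<in> poly_fun" "\<And>v. f v = f (v - l v *\<^sub>R w) + l v * f' v"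
proof -
  let ?\<pi> = "\<lambda>v. v - l v *\<^sub>R w"
  have "linear ?\<pi>"
    using \<open>linear l\<close> unfolding linear_iff by (auto simp: linear_add linear_scale algebra_simps)
  from assms(1) have "\<exists>f'\<in>poly_fun. \<forall>v. f v = f (?\<pi> v) + l v * f' v"
  proof (induction rule: poly_fun.induct)
    case (const c)
    show ?case by (rule bexI[of _ "\<lambda>v. 0"]) auto
  next
    case (lin f)
    show ?case
      using assms(3) by (intro bexI[of _ "\<lambda>v. f w"]) (auto simp: linear_diff[OF lin] linear_scale[OF lin])
  next
    case (add f g)
    then obtain f' g' where "f' \<in> poly_fun" "g' \<in> poly_fun"
      and f: "\<forall>v. f v = f (?\<pi> v) + l v * f' v" and g: "\<forall>v. g v = g (?\<pi> v) + l v * g' v"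
      by blast
    have "f v + g v = f (?\<pi> v) + g (?\<pi> v) + l v * (f' v + g' v)" for v
      using f[rule_format, of v] g[rule_format, of v] by (simp add: distrib_left)
    then show ?case
      using \<open>f' \<in> poly_fun\<close> \<open>g' \<in> poly_fun\<close> by (intro bexI[of _ "\<lambda>v. f' v + g' v"]) blast+
  next
    case (mult f g)
    then obtain f' g' where "f' \<in> poly_fun" "g' \<in> poly_fun"
      and f: "\<forall>v. f v = f (?\<pi> v) + l v * f' v" and g: "\<forall>v. g v = g (?\<pi> v) + l v * g' v"
      by blast
    have "f v * g v = f (?\<pi> v) * g (?\<pi> v) +
        l v * (f (?\<pi> v) * g' v + f' v * g (?\<pi> v) + l v * f' v * g' v)" for v
      using f[rule_format, of v] g[rule_format, of v] by (simp add: algebra_simps)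
    moreover have "(\<lambda>v. f (?\<pi> v) * g' v + f' v * g (?\<pi> v) + l v * f' v * g' v) \<in> poly_fun"
      using poly_fun.lin[OF \<open>linear l\<close>] \<open>f' \<in> poly_fun\<close> \<open>g' \<in> poly_fun\<close>
        poly_fun_compose_linear[OF mult.hyps(1) \<open>linear ?\<pi>\<close>]
        poly_fun_compose_linear[OF mult.hyps(2) \<open>linear ?\<pi>\<close>]
      by (intro poly_fun.add poly_fun.mult) assumption+
    ultimately show ?case
      by (intro bexI[of _ "\<lambda>v. f (?\<pi> v) * g' v + f' v * g (?\<pi> v) + l v * f' v * g' v"]) blast+
  qed
  then show ?thesis using that by blast
qed

lemma poly_fun_divisible_by_linear:
  assumes "f \<in> poly_fun" and "linear l" "l w \<noteq> 0" and vanish: "\<And>v. l v = 0 \<Longrightarrow> f v = 0"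
  obtains g where "g \<in> poly_fun" "\<And>v. f v = l v * g v"
proof -
  have "l (w /\<^sub>R l w) = 1"
    using assms(2,3) by (simp add: linear_scale)
  from poly_fun_decompose_linear[OF assms(1,2) this] obtain g where "g \<in> poly_fun"
    and g: "\<And>v. f v = f (v - l v *\<^sub>R (w /\<^sub>R l w)) + l v * g v"
    by blast
  moreover have "f (v - l v *\<^sub>R (w /\<^sub>R l w)) = 0" for v
    using assms(2,3) by (intro vanish) (simp add: linear_diff linear_scale)
  ultimately show ?thesis
    using that g by (metis add_0)
qed

lemma Q_idealI:
  assumes "g \<in> poly_fun" and "\<And>v. f v = Q v * g v"
  shows "f \<in> Q_ideal Q"
proof -
  have "f = (\<lambda>v. Q v * g v)"
    using assms(2) by (rule ext)
  then show ?thesis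
    unfolding Q_ideal_def using assms(1) by blast
qed

lemma Q_idealE:
  assumes "f \<in> Q_ideal Q"
  obtains g where "g \<in> poly_fun" "\<And>v. f v = Q v * g v"
  using assms unfolding Q_ideal_def by auto

lemma Q_ideal_vanishes: "f \<in> Q_ideal Q \<Longrightarrow> Q v = 0 \<Longrightarrow> f v = 0"
  by (erule Q_idealE) simp

lemma Q_ideal_sum_mult:
  assumes "finite F" and "\<And>i. i \<in> F \<Longrightarrow> c i \<in> poly_fun" and "\<And>i. i \<in> F \<Longrightarrow> m i \<in> Q_ideal Q"
  shows "(\<lambda>v. \<Sum>i\<in>F. c i v * m i v) \<in> Q_ideal Q"
proof -
  have "\<forall>i\<in>F. \<exists>g. g \<in> poly_fun \<and> (\<forall>v. m i v = Q v * g v)"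
    using assms(3) by (metis Q_idealE)
  then obtain g where g: "\<And>i. i \<in> F \<Longrightarrow> g i \<in> poly_fun" "\<And>i v. i \<in> F \<Longrightarrow> m i v = Q v * g i v"
    by metis
  show ?thesis
  proof (rule Q_idealI)
    show "(\<lambda>v. \<Sum>i\<in>F. c i v * g i v) \<in> poly_fun"
      using assms(1,2) g(1) by (intro poly_fun_sum poly_fun.mult)
    show "(\<Sum>i\<in>F. c i v * m i v) = Q v * (\<Sum>i\<in>F. c i v * g i v)" for v
      unfolding sum_distrib_left by (intro sum.cong) (simp_all add: g(2))
  qed
qed

section \<open>The ideal of the null cone\<close>

text \<open>The properties of a quadratic form \<open>Q v = B v v\<close> used below, for a null vector \<open>u\<close>
  and \<open>b v = 2 B v u\<close>.\<close>
locale null_direction =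
  fixes Q b :: "'v::real_vector \<Rightarrow> real" and u :: 'v
  assumes poly_Q: "Q \<in> poly_fun"
    and linear_b: "linear b"
    and Q_shift: "\<And>v t. Q (v + t *\<^sub>R u) = Q v + t * b v"
    and b_nonzero: "\<exists>w. b w \<noteq> 0"
    and Q_nonzero_on_kernel: "\<exists>z. b z = 0 \<and> Q z \<noteq> 0"
begin

lemma b_u_eq_0: "b u = 0"
proof -
  have "Q (v + u + 1 *\<^sub>R u) = Q (v + 2 *\<^sub>R u)" for v
    by (simp add: algebra_simps scaleR_2)
  then have "Q v + b v + b (v + u) = Q v + 2 * b v" for v
    using Q_shift[of v 1] Q_shift[of "v + u" 1] Q_shift[of v 2] by simp
  from this[of 0] show ?thesis
    using linear_add[OF linear_b] linear_0[OF linear_b] by simp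
qed

lemma b_shift: "b (v + t *\<^sub>R u) = b v"
  using b_u_eq_0 by (simp add: linear_add[OF linear_b] linear_scale[OF linear_b])

definition to_cone :: "'v \<Rightarrow> 'v" where
  "to_cone v = v + (- Q v / b v) *\<^sub>R u"

lemma Q_to_cone: "b v \<noteq> 0 \<Longrightarrow> Q (to_cone v) = 0"
  unfolding to_cone_def Q_shift by simp

lemma b_to_cone: "b (to_cone v) = b v"
  unfolding to_cone_def by (rule b_shift)

text \<open>Being constant along \<open>u\<close>, the remainder \<open>h\<close> is determined by the values of \<open>f\<close>
  on the cone.\<close>
definition has_invariant_remainder :: "('v \<Rightarrow> real) \<Rightarrow> bool" where
  "has_invariant_remainder f \<longleftrightarrow> (\<exists>d g h. g \<in> poly_fun \<and> h \<in> poly_fun \<and>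
     (\<forall>v t. h (v + t *\<^sub>R u) = h v) \<and> (\<forall>v. b v ^ d * f v = Q v * g v + h v))"

lemma has_invariant_remainderI:
  assumes "g \<in> poly_fun" "h \<in> poly_fun" "\<And>v t. h (v + t *\<^sub>R u) = h v"
    and "\<And>v. b v ^ d * f v = Q v * g v + h v"
  shows "has_invariant_remainder f"
  using assms unfolding has_invariant_remainder_def by blast

lemma has_invariant_remainder_linear:
  assumes "linear f"
  shows "has_invariant_remainder f"
proof -
  let ?h = "\<lambda>v. b v * f v - Q v * f u"
  show ?thesis
  proof (rule has_invariant_remainderI[where g = "\<lambda>v. f u" and h = ?h and d = 1])
    show "?h (v + t *\<^sub>R u) = ?h v" for v t
      unfolding Q_shift b_shift linear_add[OF assms] linear_scale[OF assms] by (simp add: algebra_simps)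
    show "?h \<in> poly_fun"
      using poly_fun.lin[OF linear_b] poly_fun.lin[OF assms] poly_Q
      by (intro poly_fun_diff poly_fun.mult poly_fun.const)
  qed (simp_all add: poly_fun.const)
qed

lemma has_invariant_remainder_add:
  assumes "has_invariant_remainder f1" "has_invariant_remainder f2"
  shows "has_invariant_remainder (\<lambda>v. f1 v + f2 v)"
proof -
  obtain d1 g1 h1 d2 g2 h2 where "g1 \<in> poly_fun" "h1 \<in> poly_fun" "g2 \<in> poly_fun" "h2 \<in> poly_fun"
    and inv: "\<forall>v t. h1 (v + t *\<^sub>R u) = h1 v" "\<forall>v t. h2 (v + t *\<^sub>R u) = h2 v"
    and f1: "\<forall>v. b v ^ d1 * f1 v = Q v * g1 v + h1 v" and f2: "\<forall>v. b v ^ d2 * f2 v = Q v * g2 v + h2 v"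
    using assms unfolding has_invariant_remainder_def by blast
  show ?thesis
  proof (rule has_invariant_remainderI)
    show "(\<lambda>v. b v ^ d2 * g1 v + b v ^ d1 * g2 v) \<in> poly_fun"
      using poly_fun.lin[OF linear_b] \<open>g1 \<in> poly_fun\<close> \<open>g2 \<in> poly_fun\<close>
      by (intro poly_fun.add poly_fun.mult poly_fun_power)
    show "(\<lambda>v. b v ^ d2 * h1 v + b v ^ d1 * h2 v) \<in> poly_fun"
      using poly_fun.lin[OF linear_b] \<open>h1 \<in> poly_fun\<close> \<open>h2 \<in> poly_fun\<close>
      by (intro poly_fun.add poly_fun.mult poly_fun_power)
    show "b (v + t *\<^sub>R u) ^ d2 * h1 (v + t *\<^sub>R u) + b (v + t *\<^sub>R u) ^ d1 * h2 (v + t *\<^sub>R u) =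
        b v ^ d2 * h1 v + b v ^ d1 * h2 v" for v t
      using inv by (simp add: b_shift)
    have "b v ^ (d1 + d2) * (f1 v + f2 v) = b v ^ d2 * (Q v * g1 v + h1 v) + b v ^ d1 * (Q v * g2 v + h2 v)" for v
      unfolding f1[rule_format, symmetric] f2[rule_format, symmetric] by (simp add: power_add algebra_simps)
    then show "b v ^ (d1 + d2) * (f1 v + f2 v) =
        Q v * (b v ^ d2 * g1 v + b v ^ d1 * g2 v) + (b v ^ d2 * h1 v + b v ^ d1 * h2 v)" for v
      by (simp add: algebra_simps)
  qed
qed

lemma has_invariant_remainder_mult:
  assumes "has_invariant_remainder f1" "has_invariant_remainder f2"
  shows "has_invariant_remainder (\<lambda>v. f1 v * f2 v)"
proof -
  obtain d1 g1 h1 d2 g2 h2 where "g1 \<in> poly_fun" "h1 \<in> poly_fun" "g2 \<in> poly_fun" "h2 \<in> poly_fun"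
    and inv: "\<forall>v t. h1 (v + t *\<^sub>R u) = h1 v" "\<forall>v t. h2 (v + t *\<^sub>R u) = h2 v"
    and f1: "\<forall>v. b v ^ d1 * f1 v = Q v * g1 v + h1 v" and f2: "\<forall>v. b v ^ d2 * f2 v = Q v * g2 v + h2 v"
    using assms unfolding has_invariant_remainder_def by blast
  show ?thesis
  proof (rule has_invariant_remainderI)
    show "(\<lambda>v. g1 v * Q v * g2 v + g1 v * h2 v + h1 v * g2 v) \<in> poly_fun"
      using poly_Q \<open>g1 \<in> poly_fun\<close> \<open>h1 \<in> poly_fun\<close> \<open>g2 \<in> poly_fun\<close> \<open>h2 \<in> poly_fun\<close>
      by (intro poly_fun.add poly_fun.mult)
    show "(\<lambda>v. h1 v * h2 v) \<in> poly_fun"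
      using \<open>h1 \<in> poly_fun\<close> \<open>h2 \<in> poly_fun\<close> by (rule poly_fun.mult)
    show "h1 (v + t *\<^sub>R u) * h2 (v + t *\<^sub>R u) = h1 v * h2 v" for v t
      using inv by simp
    have "b v ^ (d1 + d2) * (f1 v * f2 v) = (Q v * g1 v + h1 v) * (Q v * g2 v + h2 v)" for v
      unfolding f1[rule_format, symmetric] f2[rule_format, symmetric] by (simp add: power_add algebra_simps)
    then show "b v ^ (d1 + d2) * (f1 v * f2 v) =
        Q v * (g1 v * Q v * g2 v + g1 v * h2 v + h1 v * g2 v) + h1 v * h2 v" for v
      by (simp add: algebra_simps)
  qed
qed

lemma has_invariant_remainder: "f \<in> poly_fun \<Longrightarrow> has_invariant_remainder f"
proof (induction rule: poly_fun.induct)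
  case (const c)
  show ?case
    by (rule has_invariant_remainderI[where g = "\<lambda>v. 0" and h = "\<lambda>v. c" and d = 0]) auto
qed (auto intro: has_invariant_remainder_linear has_invariant_remainder_add has_invariant_remainder_mult)

lemma remainder_on_cone:
  assumes "f \<in> poly_fun"
  obtains d g h where "\<And>v. b v ^ d * f v = Q v * g v + h v" "g \<in> poly_fun" "h \<in> poly_fun"
    "\<And>v. b v \<noteq> 0 \<Longrightarrow> h v = b v ^ d * f (to_cone v)"
proof -
  from has_invariant_remainder[OF assms] obtain d g h where "g \<in> poly_fun" "h \<in> poly_fun"
    and inv: "\<forall>v t. h (v + t *\<^sub>R u) = h v" and div: "\<forall>v. b v ^ d * f v = Q v * g v + h v"
    unfolding has_invariant_remainder_def by blast
  have "h v = b v ^ d * f (to_cone v)" if "b v \<noteq> 0" for v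
  proof -
    have "h v = h (to_cone v)"
      unfolding to_cone_def using inv by metis
    also have "\<dots> = b (to_cone v) ^ d * f (to_cone v) - Q (to_cone v) * g (to_cone v)"
      using div by simp
    also have "\<dots> = b v ^ d * f (to_cone v)"
      using Q_to_cone[OF that] b_to_cone by simp
    finally show ?thesis .
  qed
  with \<open>g \<in> poly_fun\<close> \<open>h \<in> poly_fun\<close> div show ?thesis
    using that by blast
qed

text \<open>Here the hypothesis that \<open>Q\<close> does not vanish on the kernel of \<open>b\<close> is used:
  it makes \<open>b\<close> coprime to \<open>Q\<close>.\<close>
lemma Q_ideal_if_power_multiple:
  assumes "f \<in> poly_fun" and "g \<in> poly_fun" and "\<And>v. b v ^ d * f v = Q v * g v"
  shows "f \<in> Q_ideal Q"
  using assms(2,3)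
proof (induction d arbitrary: g)
  case 0
  then show ?case by (intro Q_idealI[of g]) auto
next
  case (Suc d)
  have "affine {v. b v = 0}"
    unfolding affine_def by (simp add: linear_add[OF linear_b] linear_scale[OF linear_b])
  moreover have "Q v * g v = 0" if "v \<in> {v. b v = 0}" for v
    using Suc.prems(2)[of v] that by simp
  ultimately have "(\<forall>v\<in>{v. b v = 0}. Q v = 0) \<or> (\<forall>v\<in>{v. b v = 0}. g v = 0)"
    by (rule poly_fun_no_zero_divisors_on_affine[OF _ poly_Q Suc.prems(1)])
  then have "g v = 0" if "b v = 0" for v
    using Q_nonzero_on_kernel that by blast
  moreover obtain w where "b w \<noteq> 0"
    using b_nonzero by blast
  ultimately obtain g' where "g' \<in> poly_fun" and g': "\<And>v. g v = b v * g' v"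
    using poly_fun_divisible_by_linear[OF Suc.prems(1) linear_b] by blast
  have "b v * (b v ^ d * f v - Q v * g' v) = 0" for v
    using Suc.prems(2)[of v] g'[of v] by (simp add: algebra_simps)
  moreover have "(\<lambda>v. b v ^ d * f v - Q v * g' v) \<in> poly_fun"
    using poly_fun.lin[OF linear_b] assms(1) poly_Q \<open>g' \<in> poly_fun\<close>
    by (intro poly_fun_diff poly_fun.mult poly_fun_power)
  ultimately have "\<forall>v. b v ^ d * f v - Q v * g' v = 0"
    using poly_fun_no_zero_divisors[OF poly_fun.lin[OF linear_b]] \<open>b w \<noteq> 0\<close> by blast
  then show ?case
    using Suc.IH[OF \<open>g' \<in> poly_fun\<close>] by simp
qed

theorem Q_ideal_prime:
  assumes "f \<in> poly_fun" "g \<in> poly_fun" and fg: "\<And>v. Q v = 0 \<Longrightarrow> f v * g v = 0"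
  shows "f \<in> Q_ideal Q \<or> g \<in> Q_ideal Q"
proof -
  obtain d1 g1 h1 where f: "\<And>v. b v ^ d1 * f v = Q v * g1 v + h1 v"
    and "g1 \<in> poly_fun" "h1 \<in> poly_fun" and h1: "\<And>v. b v \<noteq> 0 \<Longrightarrow> h1 v = b v ^ d1 * f (to_cone v)"
    using remainder_on_cone[OF assms(1)] by metis
  obtain d2 g2 h2 where g: "\<And>v. b v ^ d2 * g v = Q v * g2 v + h2 v"
    and "g2 \<in> poly_fun" "h2 \<in> poly_fun" and h2: "\<And>v. b v \<noteq> 0 \<Longrightarrow> h2 v = b v ^ d2 * g (to_cone v)"
    using remainder_on_cone[OF assms(2)] by metis
  have "b v * (h1 v * h2 v) = 0" for v
  proof (cases "b v = 0")
    case False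
    then have "f (to_cone v) * g (to_cone v) = 0"
      by (intro fg Q_to_cone)
    then show ?thesis
      unfolding h1[OF False] h2[OF False] by (simp add: algebra_simps)
  qed simp
  with poly_fun_no_zero_divisors[OF poly_fun.lin[OF linear_b] poly_fun.mult[OF \<open>h1 \<in> poly_fun\<close> \<open>h2 \<in> poly_fun\<close>]]
  have "\<forall>v. h1 v * h2 v = 0"
    using b_nonzero by blast
  with poly_fun_no_zero_divisors[OF \<open>h1 \<in> poly_fun\<close> \<open>h2 \<in> poly_fun\<close>]
  have "(\<forall>v. h1 v = 0) \<or> (\<forall>v. h2 v = 0)"
    by blast
  then show ?thesis
    using Q_ideal_if_power_multiple[OF assms(1) \<open>g1 \<in> poly_fun\<close>, of d1]
      Q_ideal_if_power_multiple[OF assms(2) \<open>g2 \<in> poly_fun\<close>, of d2] f g by auto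
qed

lemma one_notin_Q_ideal: "(\<lambda>v. 1) \<notin> Q_ideal Q"
  using b_nonzero Q_to_cone Q_ideal_vanishes[of "\<lambda>v. 1" Q] by force

theorem Q_ideal_iff_vanishes_on_cone:
  assumes "f \<in> poly_fun"
  shows "f \<in> Q_ideal Q \<longleftrightarrow> (\<forall>v. Q v = 0 \<longrightarrow> f v = 0)"
  using Q_ideal_vanishes Q_ideal_prime[OF assms poly_fun.const[of 1]] one_notin_Q_ideal by auto

end

lemma poly_fun_quadratic_form:
  fixes B :: "'v::euclidean_space \<Rightarrow> 'v \<Rightarrow> real"
  assumes "bilinear B"
  shows "(\<lambda>v. B v v) \<in> poly_fun"
proof -
  have "B v v = (\<Sum>i\<in>Basis. (v \<bullet> i) * B i v)" for v
  proof -
    have lin: "linear (\<lambda>x. B x v)"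
      using assms unfolding bilinear_def by blast
    have "B (\<Sum>i\<in>Basis. (v \<bullet> i) *\<^sub>R i) v = (\<Sum>i\<in>Basis. (v \<bullet> i) * B i v)"
      by (simp add: linear_sum[OF lin] linear_scale[OF lin])
    then show ?thesis
      by (simp only: euclidean_representation)
  qed
  moreover have "(\<lambda>v. \<Sum>i\<in>Basis. (v \<bullet> i) * B i v) \<in> poly_fun"
  proof (intro poly_fun_sum poly_fun.mult poly_fun.lin finite_Basis)
    show "linear (\<lambda>v. v \<bullet> i)" and "linear (B i)" for i :: 'v
      using assms bounded_linear_inner_left unfolding bilinear_def by (auto intro: bounded_linear.linear)
  qed
  ultimately show ?thesis
    by simp
qed

lemma null_direction_quadratic_form:
  fixes B :: "'v::euclidean_space \<Rightarrow> 'v \<Rightarrow> real"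
  assumes "bilinear B" and sym: "\<And>v w. B v w = B w v"
    and "B u u = 0" "B u w \<noteq> 0" and "B z u = 0" "B z z \<noteq> 0"
  shows "null_direction (\<lambda>v. B v v) (\<lambda>v. 2 * B v u) u"
proof (rule null_direction.intro)
  show "(\<lambda>v. B v v) \<in> poly_fun"
    by (rule poly_fun_quadratic_form[OF \<open>bilinear B\<close>])
  show "linear (\<lambda>v. 2 * B v u)"
    using \<open>bilinear B\<close> unfolding linear_iff by (simp add: bilinear_ladd bilinear_lmul algebra_simps)
  show "B (v + t *\<^sub>R u) (v + t *\<^sub>R u) = B v v + t * (2 * B v u)" for v t
    using \<open>bilinear B\<close> \<open>B u u = 0\<close> sym[of u v]
    by (simp add: bilinear_ladd bilinear_radd bilinear_lmul bilinear_rmul algebra_simps)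
  show "\<exists>w. 2 * B w u \<noteq> 0"
    using \<open>B u w \<noteq> 0\<close> sym[of u w] by auto
  show "\<exists>z. 2 * B z u = 0 \<and> B z z \<noteq> 0"
    using \<open>B z u = 0\<close> \<open>B z z \<noteq> 0\<close> by auto
qed

text \<open>With an orthonormal basis \<open>e\<close>, the witnesses are \<open>u = e\<^sub>0 + e\<^sub>p\<^sub>+\<^sub>q\<^sub>-\<^sub>1\<close>
  and \<open>z = e\<^sub>1\<close>; the latter is where \<open>p + q \<ge> 3\<close> is needed.\<close>
lemma has_signature_null_direction:
  fixes B :: "'v::euclidean_space \<Rightarrow> 'v \<Rightarrow> real"
  assumes "has_signature B p q" and "1 \<le> p" "1 \<le> q" "3 \<le> p + q"
  obtains b u where "null_direction (\<lambda>v. B v v) b u"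
proof -
  from assms(1) obtain e :: "nat \<Rightarrow> 'v" where "bilinear B" and sym: "\<forall>v w. B v w = B w v"
    and orth: "\<forall>i<p + q. \<forall>j<p + q. i \<noteq> j \<longrightarrow> B (e i) (e j) = 0"
    and pos: "\<forall>i<p. B (e i) (e i) = 1" and neg: "\<forall>i. p \<le> i \<and> i < p + q \<longrightarrow> B (e i) (e i) = -1"
    unfolding has_signature_def by (elim conjE exE)
  let ?n = "p + q - 1"
  define u where "u = e 0 + e ?n"
  have e0: "B (e 0) (e 0) = 1" and en: "B (e ?n) (e ?n) = -1" and e0n: "B (e 0) (e ?n) = 0"
    using pos neg orth assms(2-4) by auto
  have e1: "B (e 1) (e 1) \<noteq> 0"
    using pos neg assms(2-4) by (cases "1 < p") auto
  have "B (e 1) (e 0) = 0" "B (e 1) (e ?n) = 0"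
    using orth assms(2-4) by auto
  then have "B (e 1) u = 0"
    unfolding u_def using \<open>bilinear B\<close> by (simp add: bilinear_radd)
  moreover have "B u u = 0" and "B u (e 0) \<noteq> 0"
    unfolding u_def using \<open>bilinear B\<close> e0 en e0n sym
    by (simp_all add: bilinear_ladd bilinear_radd)
  ultimately show ?thesis
    using null_direction_quadratic_form[OF \<open>bilinear B\<close> _ _ _ _ e1] sym that by blast
qed

section \<open>Maximal minors over a commutative ring\<close>

definition submat :: "'a mat \<Rightarrow> nat list \<Rightarrow> nat list \<Rightarrow> 'a mat" where
  "submat A rs cs = mat (length rs) (length cs) (\<lambda>(i, j). A $$ (rs ! i, cs ! j))"

lemma submat_carrier [simp]: "submat A rs cs \<in> carrier_mat (length rs) (length cs)"
  unfolding submat_def by simp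

lemma submat_dim [simp]:
  "dim_row (submat A rs cs) = length rs" "dim_col (submat A rs cs) = length cs"
  unfolding submat_def by simp_all

lemma submat_index [simp]:
  "i < length rs \<Longrightarrow> j < length cs \<Longrightarrow> submat A rs cs $$ (i, j) = A $$ (rs ! i, cs ! j)"
  unfolding submat_def by simp

lemma det_permute_cols:
  assumes "M \<in> carrier_mat n n" and p: "p permutes {0..<n}"
  shows "det (mat n n (\<lambda>(i, j). M $$ (i, p j))) = signof p * det M"
proof -
  let ?N = "mat n n (\<lambda>(i, j). transpose_mat M $$ (p i, j))"
  have "mat n n (\<lambda>(i, j). M $$ (i, p j)) = transpose_mat ?N"
    using assms(1) permutes_in_image[OF p] by (intro eq_matI) auto
  then have "det (mat n n (\<lambda>(i, j). M $$ (i, p j))) = det ?N"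
    using det_transpose[of ?N n] by simp
  also have "\<dots> = signof p * det (transpose_mat M)"
    using assms(1) by (intro det_permute_rows[OF _ p]) simp
  finally show ?thesis
    using det_transpose[OF assms(1)] by simp
qed

lemma det_submat_reorder_cols:
  assumes "distinct cs" "length cs = n" "set cs \<subseteq> {..<n}" and "length rs = n"
  obtains p where "p permutes {..<n}" "det (submat A rs cs) = signof p * det (submat A rs [0..<n])"
proof -
  have "set cs = set [0..<n]"
    using assms(1-3) card_subset_eq[of "{..<n}" "set cs"] distinct_card[of cs] by (simp add: lessThan_atLeast0)
  then have "mset cs = mset [0..<n]"
    using assms(1) by (metis distinct_upt set_eq_iff_mset_eq_distinct)
  then obtain p where p: "p permutes {..<n}" and cs: "permute_list p [0..<n] = cs"
    using mset_eq_permutation by (metis length_upt minus_nat.diff_0)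
  have "cs ! j = p j" if "j < n" for j
    using permute_list_nth[of p "[0..<n]" j] p that permutes_in_image[OF p] unfolding cs by simp
  then have "submat A rs cs = mat n n (\<lambda>(i, j). submat A rs [0..<n] $$ (i, p j))"
    using assms(2,4) permutes_in_image[OF p] by (intro eq_matI) auto
  moreover have "submat A rs [0..<n] \<in> carrier_mat n n"
    using assms(4) submat_carrier[of A rs "[0..<n]"] by simp
  ultimately have "det (submat A rs cs) = signof p * det (submat A rs [0..<n])"
    using det_permute_cols[of "submat A rs [0..<n]" n p] p by (simp add: atLeast0LessThan)
  with p that show ?thesis by blast
qed

lemma mat_delete_submat_last_row:
  assumes "length rs = k" "m < length cs"
  shows "mat_delete (submat A (rs @ [i]) cs) k m = submat A rs (take m cs @ drop (Suc m) cs)"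
  using assms unfolding submat_def mat_delete_def by (intro eq_matI) (auto simp: nth_append min_def)

lemma det_submat_snoc_row:
  assumes "length rs = k" "length cs = Suc k"
  shows "det (submat A (rs @ [i]) cs) =
    (\<Sum>m<Suc k. (-1) ^ (k + m) * det (submat A rs (take m cs @ drop (Suc m) cs)) * A $$ (i, cs ! m))"
proof -
  let ?N = "submat A (rs @ [i]) cs"
  have "?N \<in> carrier_mat (Suc k) (Suc k)"
    using assms submat_carrier[of A "rs @ [i]" cs] by simp
  then have "det ?N = (\<Sum>m<Suc k. ?N $$ (k, m) * cofactor ?N k m)"
    by (rule laplace_expansion_row) simp
  also have "\<dots> = (\<Sum>m<Suc k. (-1) ^ (k + m) * det (submat A rs (take m cs @ drop (Suc m) cs)) * A $$ (i, cs ! m))"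
  proof (rule sum.cong[OF refl])
    fix m assume "m \<in> {..<Suc k}"
    then have "?N $$ (k, m) = A $$ (i, cs ! m)"
      "cofactor ?N k m = (-1) ^ (k + m) * det (submat A rs (take m cs @ drop (Suc m) cs))"
      using assms by (simp_all add: nth_append cofactor_def mat_delete_submat_last_row)
    then show "?N $$ (k, m) * cofactor ?N k m =
      (-1) ^ (k + m) * det (submat A rs (take m cs @ drop (Suc m) cs)) * A $$ (i, cs ! m)"
      by simp
  qed
  finally show ?thesis .
qed

lemma det_submat_snoc_repeated_row:
  assumes "i \<in> set rs" and "length cs = Suc (length rs)"
  shows "det (submat A (rs @ [i]) cs) = 0"
proof -
  obtain m where "m < length rs" "rs ! m = i"
    using assms(1) by (metis in_set_conv_nth)
  then have "row (submat A (rs @ [i]) cs) m = row (submat A (rs @ [i]) cs) (length rs)"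
    by (intro eq_vecI) (auto simp: nth_append)
  then show ?thesis
    using det_identical_rows[of _ "Suc (length rs)" m "length rs"] \<open>m < length rs\<close> assms(2)
      submat_carrier[of A "rs @ [i]" cs] by simp
qed

lemma sum_list_positions:
  fixes f g :: "nat \<Rightarrow> 'a::comm_semiring_0"
  assumes "set cs \<subseteq> {..<r}"
  shows "(\<Sum>j<r. (\<Sum>m<length cs. if cs ! m = j then f m else 0) * g j) = (\<Sum>m<length cs. f m * g (cs ! m))"
proof -
  have "(\<Sum>j<r. (\<Sum>m<length cs. if cs ! m = j then f m else 0) * g j) =
      (\<Sum>m<length cs. \<Sum>j<r. if cs ! m = j then f m * g j else 0)"
    unfolding sum_distrib_right by (subst sum.swap) (intro sum.cong refl, simp)
  also have "\<dots> = (\<Sum>m<length cs. f m * g (cs ! m))"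
  proof (intro sum.cong refl)
    fix m assume "m \<in> {..<length cs}"
    then have "cs ! m \<in> set cs"
      by simp
    with assms have "cs ! m < r"
      by blast
    then show "(\<Sum>j<r. if cs ! m = j then f m * g j else 0) = f m * g (cs ! m)"
      by simp
  qed
  finally show ?thesis .
qed

lemma sum_list_positions_nth:
  assumes "distinct cs" and "m0 < length cs"
  shows "(\<Sum>m<length cs. if cs ! m = cs ! m0 then f m else 0) = f m0"
  using assms by (simp add: nth_eq_iff_index_eq cong: if_cong)

locale subring_and_ideal =
  fixes S P :: "'a::comm_ring_1 set"
  assumes one_S: "1 \<in> S" and diff_S: "x \<in> S \<Longrightarrow> y \<in> S \<Longrightarrow> x - y \<in> S"
    and mult_S: "x \<in> S \<Longrightarrow> y \<in> S \<Longrightarrow> x * y \<in> S"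
    and zero_P: "0 \<in> P" and add_P: "x \<in> P \<Longrightarrow> y \<in> P \<Longrightarrow> x + y \<in> P"
    and mult_P: "x \<in> P \<Longrightarrow> y * x \<in> P" and one_notin_P: "1 \<notin> P"
begin

lemma zero_S: "0 \<in> S"
  using diff_S[OF one_S one_S] by simp

lemma uminus_S: "x \<in> S \<Longrightarrow> - x \<in> S"
  using diff_S[OF zero_S] by fastforce

lemma add_S: "x \<in> S \<Longrightarrow> y \<in> S \<Longrightarrow> x + y \<in> S"
  using diff_S[OF _ uminus_S] by fastforce

lemma sum_S: "(\<And>i. i \<in> F \<Longrightarrow> f i \<in> S) \<Longrightarrow> sum f F \<in> S"
  by (induction F rule: infinite_finite_induct) (auto intro: zero_S add_S)

lemma prod_S: "(\<And>i. i \<in> F \<Longrightarrow> f i \<in> S) \<Longrightarrow> prod f F \<in> S"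
  by (induction F rule: infinite_finite_induct) (auto intro: one_S mult_S)

lemma power_S: "x \<in> S \<Longrightarrow> x ^ n \<in> S"
  by (induction n) (auto intro: one_S mult_S)

lemma det_S:
  assumes "M \<in> carrier_mat n n" and "\<And>i j. i < n \<Longrightarrow> j < n \<Longrightarrow> M $$ (i, j) \<in> S"
  shows "det M \<in> S"
proof -
  have "(signof p :: 'a) \<in> S" for p
    using one_S uminus_S by (auto simp: sign_def)
  moreover have "(\<Prod>i = 0..<n. M $$ (i, p i)) \<in> S" if "p permutes {0..<n}" for p
    using permutes_in_image[OF that] by (intro prod_S assms(2)) auto
  ultimately show ?thesis
    unfolding det_def'[OF assms(1)] by (intro sum_S mult_S) auto
qed

lemma det_submat_S:
  assumes "\<And>i j. i < w \<Longrightarrow> j < r \<Longrightarrow> A $$ (i, j) \<in> S"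
    and "set rs \<subseteq> {..<w}" "set cs \<subseteq> {..<r}" "length rs = length cs"
  shows "det (submat A rs cs) \<in> S"
  using assms by (intro det_S[of _ "length cs"]) (auto simp: subset_iff)

text \<open>The coefficients are the cofactors along the appended row of the bordered minor; the one
  at the new column \<open>j\<^sub>0\<close> is the minor itself.\<close>
lemma relation_from_maximal_minor:
  assumes A: "\<And>i j. i < w \<Longrightarrow> j < r \<Longrightarrow> A $$ (i, j) \<in> S"
    and rs: "distinct rs" "length rs = k" "set rs \<subseteq> {..<w}"
    and cs: "distinct cs" "length cs = k" "set cs \<subseteq> {..<r}"
    and j0: "j0 < r" "j0 \<notin> set cs"
    and minor: "det (submat A rs cs) \<notin> P"
    and extensions: "\<And>i. i < w \<Longrightarrow> i \<notin> set rs \<Longrightarrow> det (submat A (rs @ [i]) (cs @ [j0])) \<in> P"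
  shows "\<exists>c. (\<forall>j<r. c j \<in> S) \<and> (\<exists>j<r. c j \<notin> P) \<and> (\<forall>i<w. (\<Sum>j<r. c j * A $$ (i, j)) \<in> P)"
proof -
  define cs' where "cs' = cs @ [j0]"
  have cs': "distinct cs'" "length cs' = Suc k" "set cs' \<subseteq> {..<r}"
    using cs j0 unfolding cs'_def by auto
  define coef where "coef m = (-1) ^ (k + m) * det (submat A rs (take m cs' @ drop (Suc m) cs'))" for m
  define c where "c j = (\<Sum>m<Suc k. if cs' ! m = j then coef m else 0)" for j
  have "(\<Sum>j<r. c j * A $$ (i, j)) = det (submat A (rs @ [i]) cs')" for i
    using sum_list_positions[OF cs'(3), of coef "\<lambda>j. A $$ (i, j)"] cs'(2)
    unfolding c_def det_submat_snoc_row[OF rs(2) cs'(2)] by (simp add: coef_def)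
  moreover have "det (submat A (rs @ [i]) cs') \<in> P" if "i < w" for i
    using det_submat_snoc_repeated_row[of i rs cs' A] extensions[OF that] zero_P rs(2) cs'(2)
    unfolding cs'_def by (cases "i \<in> set rs") auto
  moreover have "c j0 = det (submat A rs cs)"
  proof -
    have "cs' ! k = j0"
      unfolding cs'_def cs(2)[symmetric] by simp
    then have "c j0 = coef k"
      using sum_list_positions_nth[OF cs'(1), of k coef] cs'(2) unfolding c_def by simp
    then show ?thesis
      using cs(2) by (simp add: coef_def cs'_def power_add[symmetric] mult_2[symmetric])
  qed
  moreover have "coef m \<in> S" if "m < Suc k" for m
  proof -
    have "set (take m cs' @ drop (Suc m) cs') \<subseteq> {..<r}"
      using cs'(3) set_take_subset[of m cs'] set_drop_subset[of "Suc m" cs'] by auto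
    moreover have "length rs = length (take m cs' @ drop (Suc m) cs')"
      using rs(2) cs'(2) that by simp
    ultimately show ?thesis
      unfolding coef_def using A rs(3) by (intro mult_S det_submat_S[of w r] power_S uminus_S one_S)
  qed
  then have "c j \<in> S" for j
    unfolding c_def by (intro sum_S) (simp add: zero_S)
  ultimately show ?thesis
    using minor j0(1) by (intro exI[of _ c]) auto
qed

text \<open>Take a largest square submatrix whose minor is not in \<open>P\<close>; it is smaller than
  \<open>r \<times> r\<close>, so it can be bordered by a further column, and the cofactor relation applies.\<close>
theorem relation_if_maximal_minors_in_ideal:
  assumes A: "\<And>i j. i < w \<Longrightarrow> j < r \<Longrightarrow> A $$ (i, j) \<in> S"
    and minors: "\<And>rs. distinct rs \<Longrightarrow> length rs = r \<Longrightarrow> set rs \<subseteq> {..<w} \<Longrightarrow>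
      det (submat A rs [0..<r]) \<in> P"
  shows "\<exists>c. (\<forall>j<r. c j \<in> S) \<and> (\<exists>j<r. c j \<notin> P) \<and> (\<forall>i<w. (\<Sum>j<r. c j * A $$ (i, j)) \<in> P)"
proof -
  define good where "good k \<longleftrightarrow> (\<exists>rs cs. distinct rs \<and> length rs = k \<and> set rs \<subseteq> {..<w} \<and>
    distinct cs \<and> length cs = k \<and> set cs \<subseteq> {..<r} \<and> det (submat A rs cs) \<notin> P)" for k
  have "good 0"
    unfolding good_def using one_notin_P by (intro exI[of _ "[]"]) (simp add: submat_def)
  have good_le: "k \<le> r" if "good k" for k
  proof -
    from that obtain cs where "distinct cs" "length cs = k" "set cs \<subseteq> {..<r}"
      unfolding good_def by blast
    then show ?thesis
      using card_mono[of "{..<r}" "set cs"] distinct_card[of cs] by simp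
  qed
  define k where "k = (GREATEST k. good k)"
  have "good k"
    unfolding k_def using \<open>good 0\<close> good_le by (rule GreatestI_nat)
  have k_max: "k' \<le> k" if "good k'" for k'
    unfolding k_def using that good_le by (rule Greatest_le_nat)
  from \<open>good k\<close> obtain rs cs where rs: "distinct rs" "length rs = k" "set rs \<subseteq> {..<w}"
    and cs: "distinct cs" "length cs = k" "set cs \<subseteq> {..<r}" and minor: "det (submat A rs cs) \<notin> P"
    unfolding good_def by blast
  have "k \<noteq> r"
  proof
    assume "k = r"
    then obtain p where "det (submat A rs cs) = signof p * det (submat A rs [0..<r])"
      using det_submat_reorder_cols[of cs r rs A] cs rs(2) \<open>k = r\<close> by blast
    then show False
      using minor minors[OF rs(1) _ rs(3)] rs(2) \<open>k = r\<close> mult_P by auto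
  qed
  with good_le[OF \<open>good k\<close>] have "card (set cs) < card {..<r}"
    using distinct_card[OF cs(1)] cs(2) by simp
  then have "\<not> {..<r} \<subseteq> set cs"
    by (meson card_mono finite_set leD)
  then obtain j0 where j0: "j0 < r" "j0 \<notin> set cs"
    by blast
  show ?thesis
  proof (rule relation_from_maximal_minor[OF A rs cs j0 minor])
    fix i assume "i < w" "i \<notin> set rs"
    show "det (submat A (rs @ [i]) (cs @ [j0])) \<in> P"
    proof (rule ccontr)
      assume "det (submat A (rs @ [i]) (cs @ [j0])) \<notin> P"
      then have "good (Suc k)"
        unfolding good_def using rs cs j0 \<open>i < w\<close> \<open>i \<notin> set rs\<close>
        by (intro exI[of _ "rs @ [i]"] exI[of _ "cs @ [j0]"]) auto
      then show False
        using k_max by fastforce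
    qed
  qed
qed

end

section \<open>Minors of polynomial maps\<close>

lemma sum_fun_apply: "(sum f A :: 'a \<Rightarrow> 'b::comm_monoid_add) v = (\<Sum>i\<in>A. f i v)"
  by (induction A rule: infinite_finite_induct) auto

lemma det_fun_apply: "(det M :: 'a \<Rightarrow> 'b::comm_ring_1) v = det (map_mat (\<lambda>f. f v) M)"
proof -
  interpret comm_ring_hom "\<lambda>f :: 'a \<Rightarrow> 'b. f v"
    by unfold_locales auto
  show ?thesis
    by simp
qed

lemma minor_eq_det: "minor r x bs v = det (mat r r (\<lambda>(i, j). x j v \<bullet> bs ! i))"
proof -
  have "(\<Prod>i = 0..<r. mat r r (\<lambda>(i, j). x j v \<bullet> bs ! i) $$ (i, p i)) = (\<Prod>i<r. x (p i) v \<bullet> bs ! i)"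
    if "p permutes {..<r}" for p
    unfolding atLeast0LessThan using permutes_in_image[OF that] by (intro prod.cong) auto
  then show ?thesis
    unfolding minor_def det_def'[OF mat_carrier] by (simp add: atLeast0LessThan)
qed

lemma minor_eq_0_if_dependent:
  assumes "\<exists>i<r. a i \<noteq> 0" and "(\<Sum>i<r. a i *\<^sub>R x i v) = 0"
  shows "minor r x bs v = 0"
proof -
  let ?M = "mat r r (\<lambda>(i, j). x j v \<bullet> bs ! i)"
  have "Matrix.vec r a \<noteq> 0\<^sub>v r"
    using assms(1) by (auto simp: vec_eq_iff)
  moreover have "?M *\<^sub>v Matrix.vec r a = 0\<^sub>v r"
  proof (rule eq_vecI)
    fix i assume "i < dim_vec (0\<^sub>v r :: real vec)"
    then have "(?M *\<^sub>v Matrix.vec r a) $ i = (\<Sum>i<r. a i *\<^sub>R x i v) \<bullet> bs ! i"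
      unfolding inner_sum_left by (simp add: mult_mat_vec_def scalar_prod_def atLeast0LessThan mult.commute)
    with \<open>i < dim_vec (0\<^sub>v r)\<close> show "(?M *\<^sub>v Matrix.vec r a) $ i = 0\<^sub>v r $ i"
      using assms(2) by simp
  qed simp
  ultimately have "det ?M = 0"
    using det_0_iff_vec_prod_zero[OF mat_carrier] vec_carrier by blast
  then show ?thesis
    by (simp add: minor_eq_det)
qed

lemma minor_poly_fun:
  assumes "bs \<in> row_sels r" and "\<forall>i<r. poly_map (x i)"
  shows "minor r x bs \<in> poly_fun"
  unfolding minor_def[abs_def]
proof (intro poly_fun_sum poly_fun.mult poly_fun.const poly_fun_prod)
  show "finite {p. p permutes {..<r}}"
    by (simp add: finite_permutations)
  fix p i assume "p \<in> {p. p permutes {..<r}}" "i \<in> {..<r}"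
  then have "p i < r" "bs ! i \<in> Basis"
    using permutes_in_image[of p "{..<r}" i] assms(1) unfolding row_sels_def by auto
  then show "(\<lambda>v. x (p i) v \<bullet> bs ! i) \<in> poly_fun"
    using assms(2) unfolding poly_map_def by blast
qed simp

lemma finite_row_sels: "finite (row_sels r :: 'w::euclidean_space list set)"
proof -
  have "row_sels r \<subseteq> {bs. set bs \<subseteq> (Basis :: 'w set) \<and> length bs \<le> r}"
    unfolding row_sels_def by auto
  then show ?thesis
    using finite_lists_length_le[OF finite_Basis] finite_subset by blast
qed

lemma minor_in_minors_ideal:
  assumes "bs \<in> row_sels r"
  shows "minor r x bs \<in> minors_ideal r x"
proof -
  have "minor r x bs = (\<lambda>v. \<Sum>bs'\<in>row_sels r. (\<lambda>v. if bs' = bs then 1 else 0) v * minor r x bs' v)"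
  proof
    fix v
    have "(\<Sum>bs'\<in>row_sels r. (if bs' = bs then 1 else 0) * minor r x bs' v) =
        (\<Sum>bs'\<in>row_sels r. if bs' = bs then minor r x bs' v else 0)"
      by (intro sum.cong) auto
    then show "minor r x bs v = (\<Sum>bs'\<in>row_sels r. (\<lambda>v. if bs' = bs then 1 else 0) v * minor r x bs' v)"
      using assms by (simp add: sum.delta[OF finite_row_sels])
  qed
  then show ?thesis
    unfolding minors_ideal_def by (intro CollectI exI conjI) auto
qed

lemma minors_ideal_subset_Q_ideal_iff:
  "minors_ideal r x \<subseteq> Q_ideal Q \<longleftrightarrow> (\<forall>bs\<in>row_sels r. minor r x bs \<in> Q_ideal Q)"
proof
  assume "\<forall>bs\<in>row_sels r. minor r x bs \<in> Q_ideal Q"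
  then show "minors_ideal r x \<subseteq> Q_ideal Q"
    unfolding minors_ideal_def using finite_row_sels by (auto intro!: Q_ideal_sum_mult)
qed (use minor_in_minors_ideal in blast)

lemma minor_vanishes_on_cone:
  assumes "minors_ideal r x \<subseteq> Q_ideal Q" and "bs \<in> row_sels r" and "Q v = 0"
  shows "minor r x bs v = 0"
  using assms Q_ideal_vanishes minor_in_minors_ideal by blast

definition coord_mat :: "'w::euclidean_space list \<Rightarrow> nat \<Rightarrow> (nat \<Rightarrow> 'v \<Rightarrow> 'w) \<Rightarrow> ('v \<Rightarrow> real) mat" where
  "coord_mat bl r x = mat (length bl) r (\<lambda>(i, j) v. x j v \<bullet> bl ! i)"

lemma det_submat_coord_mat:
  assumes "length rs = r" and "set rs \<subseteq> {..<length bl}"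
  shows "det (submat (coord_mat bl r x) rs [0..<r]) = minor r x (map ((!) bl) rs)"
proof
  fix v
  have "map_mat (\<lambda>f. f v) (submat (coord_mat bl r x) rs [0..<r]) = mat r r (\<lambda>(i, j). x j v \<bullet> map ((!) bl) rs ! i)"
  proof (rule eq_matI)
    fix i j assume "i < dim_row (mat r r (\<lambda>(i, j). x j v \<bullet> map ((!) bl) rs ! i))"
      "j < dim_col (mat r r (\<lambda>(i, j). x j v \<bullet> map ((!) bl) rs ! i))"
    moreover from this have "rs ! i \<in> set rs"
      using assms(1) by simp
    then have "rs ! i < length bl"
      using assms(2) by blast
    ultimately show "map_mat (\<lambda>f. f v) (submat (coord_mat bl r x) rs [0..<r]) $$ (i, j) =
        mat r r (\<lambda>(i, j). x j v \<bullet> map ((!) bl) rs ! i) $$ (i, j)"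
      using assms by (simp add: coord_mat_def)
  qed (use assms in simp_all)
  then show "det (submat (coord_mat bl r x) rs [0..<r]) v = minor r x (map ((!) bl) rs) v"
    by (simp add: det_fun_apply minor_eq_det)
qed

lemma coord_mat_combination:
  assumes "i < length bl"
  shows "(\<Sum>j<r. c j * coord_mat bl r x $$ (i, j)) v = (\<Sum>j<r. c j v *\<^sub>R x j v) \<bullet> bl ! i"
proof -
  have "(\<Sum>j<r. c j * coord_mat bl r x $$ (i, j)) v = (\<Sum>j<r. c j v * (x j v \<bullet> bl ! i))"
    unfolding sum_fun_apply using assms by (intro sum.cong) (auto simp: coord_mat_def)
  then show ?thesis
    by (simp add: inner_sum_left)
qed

lemma map_nth_in_row_sels:
  assumes "distinct bl" "set bl = Basis" and "distinct rs" "length rs = r" "set rs \<subseteq> {..<length bl}"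
  shows "map ((!) bl) rs \<in> row_sels r"
proof -
  have "inj_on ((!) bl) (set rs)"
  proof (rule inj_onI)
    fix i j assume "i \<in> set rs" "j \<in> set rs" "bl ! i = bl ! j"
    then show "i = j"
      using assms(5) nth_eq_iff_index_eq[OF assms(1), of i j] by auto
  qed
  moreover have "set (map ((!) bl) rs) \<subseteq> Basis"
    using assms(2,5) nth_mem[of _ bl] by auto
  ultimately show ?thesis
    unfolding row_sels_def using assms(3,4) by (simp add: distinct_map)
qed

lemma subring_and_ideal_vanishing_on:
  assumes "Z \<noteq> {}"
  shows "subring_and_ideal (poly_fun :: ('v::real_vector \<Rightarrow> real) set) {f. \<forall>v\<in>Z. f v = 0}"
proof
  show "(1 :: 'v \<Rightarrow> real) \<in> poly_fun"
    unfolding one_fun_def by (rule poly_fun.const)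
  show "f - g \<in> poly_fun" "f * g \<in> poly_fun" if "f \<in> poly_fun" "g \<in> poly_fun" for f g :: "'v \<Rightarrow> real"
    using that unfolding fun_diff_def times_fun_def by auto
  show "(1 :: 'v \<Rightarrow> real) \<notin> {f. \<forall>v\<in>Z. f v = 0}"
    using assms by auto
qed auto

text \<open>The ring-theoretic statement is applied in the ring of functions \<open>V \<Rightarrow> \<real>\<close>, with the
  polynomial functions as subring and the functions vanishing on \<open>Z\<close> as ideal.\<close>
theorem poly_relation_if_minors_vanish_on:
  fixes x :: "nat \<Rightarrow> 'v::real_vector \<Rightarrow> 'w::euclidean_space" and Z :: "'v set"
  assumes polyx: "\<forall>i<r. poly_map (x i)" and "Z \<noteq> {}"
    and minors: "\<And>bs v. bs \<in> row_sels r \<Longrightarrow> v \<in> Z \<Longrightarrow> minor r x bs v = 0"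
  shows "\<exists>c. (\<forall>i<r. c i \<in> poly_fun) \<and> (\<exists>i<r. \<exists>v\<in>Z. c i v \<noteq> 0) \<and>
    (\<forall>v\<in>Z. (\<Sum>i<r. c i v *\<^sub>R x i v) = 0)"
proof -
  interpret subring_and_ideal "poly_fun :: ('v \<Rightarrow> real) set" "{f. \<forall>v\<in>Z. f v = 0}"
    using \<open>Z \<noteq> {}\<close> by (rule subring_and_ideal_vanishing_on)
  obtain bl :: "'w list" where bl: "distinct bl" "set bl = Basis"
    using finite_distinct_list[OF finite_Basis] by blast
  let ?X = "coord_mat bl r x"
  have "\<exists>c. (\<forall>j<r. c j \<in> poly_fun) \<and> (\<exists>j<r. c j \<notin> {f. \<forall>v\<in>Z. f v = 0}) \<and>
      (\<forall>i<length bl. (\<Sum>j<r. c j * ?X $$ (i, j)) \<in> {f. \<forall>v\<in>Z. f v = 0})"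
  proof (rule relation_if_maximal_minors_in_ideal)
    fix i j assume "i < length bl" "j < r"
    then show "?X $$ (i, j) \<in> poly_fun"
      using polyx bl(2) nth_mem[of i bl] unfolding poly_map_def coord_mat_def by auto
  next
    fix rs assume "distinct rs" "length rs = r" "set rs \<subseteq> {..<length bl}"
    then have "map ((!) bl) rs \<in> row_sels r"
      by (rule map_nth_in_row_sels[OF bl])
    then show "det (submat ?X rs [0..<r]) \<in> {f. \<forall>v\<in>Z. f v = 0}"
      using minors \<open>length rs = r\<close> \<open>set rs \<subseteq> {..<length bl}\<close> by (simp add: det_submat_coord_mat)
  qed
  then obtain c where "\<forall>j<r. c j \<in> poly_fun" "\<exists>j<r. \<exists>v\<in>Z. c j v \<noteq> 0"
    and rel: "\<And>i v. i < length bl \<Longrightarrow> v \<in> Z \<Longrightarrow> (\<Sum>j<r. c j * ?X $$ (i, j)) v = 0"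
    by auto
  moreover have "(\<Sum>j<r. c j v *\<^sub>R x j v) = 0" if "v \<in> Z" for v
  proof (rule euclidean_eqI)
    fix b :: 'w assume "b \<in> Basis"
    then obtain i where "i < length bl" "b = bl ! i"
      using bl(2) by (metis in_set_conv_nth)
    then have "(\<Sum>j<r. c j v *\<^sub>R x j v) \<bullet> b = (\<Sum>j<r. c j * ?X $$ (i, j)) v"
      using coord_mat_combination[of i bl] by metis
    then show "(\<Sum>j<r. c j v *\<^sub>R x j v) \<bullet> b = 0 \<bullet> b"
      using rel[OF \<open>i < length bl\<close> that] by simp
  qed
  ultimately show ?thesis
    by blast
qed

lemma poly_map_combination:
  fixes x :: "nat \<Rightarrow> 'v::real_vector \<Rightarrow> 'w::euclidean_space"
  assumes "\<forall>i<r. c i \<in> poly_fun" and "\<forall>i<r. poly_map (x i)"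
  shows "poly_map (\<lambda>v. \<Sum>i<r. c i v *\<^sub>R x i v)"
  unfolding poly_map_def inner_sum_left
proof
  fix b :: 'w assume "b \<in> Basis"
  then show "(\<lambda>v. \<Sum>i<r. (c i v *\<^sub>R x i v) \<bullet> b) \<in> poly_fun"
    using assms unfolding poly_map_def by (auto intro!: poly_fun_sum[OF finite_lessThan])
qed

context null_direction
begin

lemma poly_map_Q_multiple:
  fixes f :: "'v \<Rightarrow> 'w::euclidean_space"
  assumes "poly_map f" and "\<And>v. Q v = 0 \<Longrightarrow> f v = 0"
  obtains y where "poly_map y" "\<And>v. f v = Q v *\<^sub>R y v"
proof -
  have "\<forall>b\<in>Basis. \<exists>g. g \<in> poly_fun \<and> (\<forall>v. f v \<bullet> b = Q v * g v)"
  proof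
    fix b :: 'w assume "b \<in> Basis"
    then have "(\<lambda>v. f v \<bullet> b) \<in> Q_ideal Q"
      using assms Q_ideal_iff_vanishes_on_cone unfolding poly_map_def by simp
    then show "\<exists>g. g \<in> poly_fun \<and> (\<forall>v. f v \<bullet> b = Q v * g v)"
      by (auto elim: Q_idealE)
  qed
  then obtain g where g: "\<And>b. b \<in> Basis \<Longrightarrow> g b \<in> poly_fun" "\<And>b v. b \<in> Basis \<Longrightarrow> f v \<bullet> b = Q v * g b v"
    by metis
  define y where "y v = (\<Sum>b\<in>Basis. g b v *\<^sub>R b)" for v
  have y: "y v \<bullet> b = g b v" if "b \<in> Basis" for v b
    unfolding y_def inner_sum_left using that by (simp add: inner_Basis if_distrib cong: if_cong)
  show ?thesis
  proof
    show "poly_map y"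
      unfolding poly_map_def using y g(1) by simp
    show "f v = Q v *\<^sub>R y v" for v
      by (rule euclidean_eqI) (simp add: g(2) y)
  qed
qed

lemma minors_ideal_subset_Q_ideal_if_dependent_on_cone:
  assumes polyx: "\<forall>i<r. poly_map (x i)"
    and dependent: "\<forall>v. Q v = 0 \<longrightarrow> (\<exists>a. (\<exists>i<r. a i \<noteq> 0) \<and> (\<Sum>i<r. a i *\<^sub>R x i v) = 0)"
  shows "minors_ideal r x \<subseteq> Q_ideal Q"
proof -
  have "minor r x bs \<in> Q_ideal Q" if bs: "bs \<in> row_sels r" for bs
  proof -
    have "minor r x bs v = 0" if "Q v = 0" for v
    proof -
      obtain a where "\<exists>i<r. a i \<noteq> 0" "(\<Sum>i<r. a i *\<^sub>R x i v) = 0"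
        using dependent \<open>Q v = 0\<close> by blast
      then show ?thesis
        by (rule minor_eq_0_if_dependent)
    qed
    then show ?thesis
      using Q_ideal_iff_vanishes_on_cone[OF minor_poly_fun[OF bs polyx]] by blast
  qed
  then show ?thesis
    using minors_ideal_subset_Q_ideal_iff by blast
qed

lemma dependent_on_cone_if_minors_ideal_subset_Q_ideal:
  assumes polyx: "\<forall>i<r. poly_map (x i)" and "minors_ideal r x \<subseteq> Q_ideal Q" and "Q v = 0"
  shows "\<exists>a. (\<exists>i<r. a i \<noteq> 0) \<and> (\<Sum>i<r. a i *\<^sub>R x i v) = 0"
proof -
  have "minor r x bs v' = 0" if "bs \<in> row_sels r" "v' \<in> {v}" for bs v'
    using minor_vanishes_on_cone[OF assms(2) \<open>bs \<in> row_sels r\<close>] that \<open>Q v = 0\<close> by simp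
  from poly_relation_if_minors_vanish_on[OF polyx insert_not_empty this]
  obtain c where "\<exists>i<r. \<exists>v'\<in>{v}. c i v' \<noteq> 0" "\<forall>v'\<in>{v}. (\<Sum>i<r. c i v' *\<^sub>R x i v') = 0"
    by blast
  then show ?thesis
    by (intro exI[of _ "\<lambda>i. c i v"]) auto
qed

lemma relation_if_minors_ideal_subset_Q_ideal:
  fixes x :: "nat \<Rightarrow> 'v \<Rightarrow> 'w::euclidean_space"
  assumes polyx: "\<forall>i<r. poly_map (x i)" and "minors_ideal r x \<subseteq> Q_ideal Q"
  shows "\<exists>c. (\<forall>i<r. c i \<in> poly_fun) \<and> (\<exists>i<r. c i \<notin> Q_ideal Q) \<and>
    (\<exists>y. poly_map y \<and> (\<forall>v. (\<Sum>i<r. c i v *\<^sub>R x i v) = Q v *\<^sub>R y v))"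
proof -
  have "{v. Q v = 0} \<noteq> {}"
    using b_nonzero Q_to_cone by blast
  from poly_relation_if_minors_vanish_on[OF polyx this] minor_vanishes_on_cone[OF assms(2)]
  obtain c where c: "\<forall>i<r. c i \<in> poly_fun" and nonzero: "\<exists>i<r. \<exists>v\<in>{v. Q v = 0}. c i v \<noteq> 0"
    and rel: "\<forall>v\<in>{v. Q v = 0}. (\<Sum>i<r. c i v *\<^sub>R x i v) = 0"
    by blast
  from nonzero have "\<exists>i<r. c i \<notin> Q_ideal Q"
    using Q_ideal_vanishes by blast
  moreover have "(\<Sum>i<r. c i v *\<^sub>R x i v) = 0" if "Q v = 0" for v
    using rel that by simp
  from poly_map_Q_multiple[OF poly_map_combination[OF c polyx] this]
  obtain y where "poly_map y" "\<And>v. (\<Sum>i<r. c i v *\<^sub>R x i v) = Q v *\<^sub>R y v"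
    by blast
  ultimately show ?thesis
    using c by blast
qed

lemma minors_ideal_subset_Q_ideal_if_relation:
  assumes polyx: "\<forall>i<r. poly_map (x i)" and c: "\<forall>i<r. c i \<in> poly_fun"
    and i0: "i0 < r" "c i0 \<notin> Q_ideal Q" and rel: "\<And>v. (\<Sum>i<r. c i v *\<^sub>R x i v) = Q v *\<^sub>R y v"
  shows "minors_ideal r x \<subseteq> Q_ideal Q"
proof -
  have "minor r x bs \<in> Q_ideal Q" if bs: "bs \<in> row_sels r" for bs
  proof -
    have "minor r x bs v * c i0 v = 0" if "Q v = 0" for v
    proof (cases "c i0 v = 0")
      case False
      then have "\<exists>i<r. c i v \<noteq> 0"
        using i0(1) by blast
      moreover have "(\<Sum>i<r. c i v *\<^sub>R x i v) = 0"
        using rel[of v] that by simp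
      ultimately have "minor r x bs v = 0"
        by (rule minor_eq_0_if_dependent)
      then show ?thesis
        by simp
    qed simp
    then have "minor r x bs \<in> Q_ideal Q \<or> c i0 \<in> Q_ideal Q"
      using Q_ideal_prime[OF minor_poly_fun[OF bs polyx]] c i0(1) by blast
    then show ?thesis
      using i0(2) by blast
  qed
  then show ?thesis
    using minors_ideal_subset_Q_ideal_iff by blast
qed

end

theorem lemma3p5:
  fixes B :: "'v::euclidean_space \<Rightarrow> 'v \<Rightarrow> real"
    and x :: "nat \<Rightarrow> 'v \<Rightarrow> 'w::euclidean_space"
    and p q r :: nat
  assumes sig: "has_signature B p q"
    and "p \<ge> 1" and "q \<ge> 1" and "p + q \<ge> 3"
    and "r \<le> DIM('w)"
    and polyx: "\<forall>i<r. poly_map (x i)"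
  defines "Q \<equiv> (\<lambda>v. B v v)"
  shows "((\<forall>v. Q v = 0 \<longrightarrow>
              (\<exists>a::nat \<Rightarrow> real. (\<exists>i<r. a i \<noteq> 0) \<and> (\<Sum>i<r. a i *\<^sub>R x i v) = 0))
          \<longleftrightarrow> minors_ideal r x \<subseteq> Q_ideal Q)
       \<and> (minors_ideal r x \<subseteq> Q_ideal Q
          \<longleftrightarrow> (\<exists>c::nat \<Rightarrow> 'v \<Rightarrow> real. (\<forall>i<r. c i \<in> poly_fun) \<and> (\<exists>i<r. c i \<notin> Q_ideal Q) \<and>
                 (\<exists>y::'v \<Rightarrow> 'w. poly_map y \<and>
                    (\<forall>v. (\<Sum>i<r. c i v *\<^sub>R x i v) = Q v *\<^sub>R y v))))"
proof -
  obtain b u where "null_direction Q b u"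
    using has_signature_null_direction[OF sig \<open>p \<ge> 1\<close> \<open>q \<ge> 1\<close> \<open>p + q \<ge> 3\<close>] unfolding Q_def by blast
  then interpret null_direction Q b u .
  have "minors_ideal r x \<subseteq> Q_ideal Q \<longleftrightarrow>
      (\<forall>v. Q v = 0 \<longrightarrow> (\<exists>a. (\<exists>i<r. a i \<noteq> 0) \<and> (\<Sum>i<r. a i *\<^sub>R x i v) = 0))"
    using minors_ideal_subset_Q_ideal_if_dependent_on_cone[OF polyx]
      dependent_on_cone_if_minors_ideal_subset_Q_ideal[OF polyx] by blast
  moreover have "minors_ideal r x \<subseteq> Q_ideal Q \<longleftrightarrow>
      (\<exists>c. (\<forall>i<r. c i \<in> poly_fun) \<and> (\<exists>i<r. c i \<notin> Q_ideal Q) \<and>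
        (\<exists>y. poly_map y \<and> (\<forall>v. (\<Sum>i<r. c i v *\<^sub>R x i v) = Q v *\<^sub>R y v)))"
    using relation_if_minors_ideal_subset_Q_ideal[OF polyx]
      minors_ideal_subset_Q_ideal_if_relation[OF polyx] by blast
  ultimately show ?thesis
    by blast
qed

end
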